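(* Let $g=\frac{\sqrt5-1}2$, $g\le\alpha<\beta\le1$, $(x,y)\in\Omega_\alpha$, $(\tilde x,\tilde y)\in S(x,y)$, and $(x_n,y_n)=\mathcal T_\alpha^n(x,y)$ for some $n\ge1$. If $\tilde x\in[\beta-1,\beta)$ and $y_n<1-\frac1{\sqrt2}$, then there is some $k\ge1$ such that $\mathcal T_\beta^k(\tilde x,\tilde y)\in S(x_n,y_n)$.
   Context: For $\alpha\in[\tfrac12,1]$: $T_\alpha(x)=\frac1x-\lfloor\frac1x+1-\alpha\rfloor$ on $[\alpha-1,\alpha)\setminus\{0\}$, $T_\alpha(0)=0$; $\mathcal T_\alpha(x,y)=\left(T_\alpha(x),\frac{1}{y+\lfloor\frac1x+1-\alpha\rfloor}\right)$ for $x\ne0$, $\mathcal T_\alpha(0,y)=(0,0)$; $\Omega_\alpha=\bigcup_{n\ge0}\overline{\mathcal T_\alpha^n([\alpha-1,\alpha)\times\{0\})}$. For a point $(x,y)$, $S(x,y)=\{(x,y),(-x,-y),(x+1,\frac{y}{1-y}),(1-x,\frac{-y}{y+1})\}$. *)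

theory Defs
  imports "HOL-Analysis.Analysis"
begin

text \<open>Nakada's alpha-continued fraction map. The formula is used for every nonzero real;
  the relevant domain is [alpha-1, alpha), which the iterates never leave.\<close>
definition Tmap :: "real \<Rightarrow> real \<Rightarrow> real" where
  "Tmap a x = (if x = 0 then 0 else 1 / x - of_int \<lfloor>1 / x + 1 - a\<rfloor>)"

definition NatExt :: "real \<Rightarrow> real \<times> real \<Rightarrow> real \<times> real" where
  "NatExt a p = (let x = fst p; y = snd p in
     if x = 0 then (0, 0) else (Tmap a x, 1 / (y + of_int \<lfloor>1 / x + 1 - a\<rfloor>)))"

definition Omega :: "real \<Rightarrow> (real \<times> real) set" where
  "Omega a = (\<Union>n. closure ((NatExt a ^^ n) ` ({a - 1..<a} \<times> {0})))"

definition Sset :: "real \<times> real \<Rightarrow> (real \<times> real) set" where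
  "Sset p = (let x = fst p; y = snd p in
     {(x, y), (-x, -y), (x + 1, y / (1 - y)), (1 - x, - y / (y + 1))})"

end

theory Submission
  imports Defs
begin

text \<open>For \<open>(sqrt 5 - 1) / 2 \<le> a < 1\<close> the set \<open>Omega a\<close> lies in an explicit closed
  \<open>NatExt a\<close>-invariant region bounding the second coordinates. Let \<open>p\<close> be in this region and
  \<open>s \<in> Sset p\<close> with first coordinate in \<open>[b - 1, b)\<close>. Comparing the \<open>b\<close>-digit of \<open>s\<close> with
  the \<open>a\<close>-digit of \<open>p\<close> shows that one or two steps of \<open>NatExt b\<close> carry \<open>s\<close> into
  \<open>Sset (NatExt a p)\<close>, except when \<open>s\<close> is the reflection \<open>(1 - x, \<dots>)\<close> of \<open>p = (x, y)\<close> and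
  the \<open>a\<close>-digit of \<open>x\<close> is small: then the orbit of \<open>s\<close> skips to \<open>Sset\<close> of the next iterate,
  but the skipped point \<open>NatExt a p\<close> has second coordinate at least \<open>1 - 1 / sqrt 2\<close>.
  Following the orbit of \<open>p\<close>, the \<open>n\<close>-th iterate can therefore only be skipped if
  \<open>y\<^sub>n \<ge> 1 - 1 / sqrt 2\<close>.\<close>

definition digit :: "real \<Rightarrow> real \<Rightarrow> int" where
  "digit a x = \<lfloor>1 / x + 1 - a\<rfloor>"

lemma digit_bounds:
  "of_int (digit a x) \<le> 1 / x + 1 - a" "of_int (digit a x) + 1 > 1 / x + 1 - a"
  unfolding digit_def by linarith+

lemma digit_eqI:
  assumes "of_int e \<le> 1 / x + 1 - a" "1 / x + 1 - a < of_int e + 1"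
  shows "digit a x = e"
  using assms unfolding digit_def by (simp add: floor_eq_iff)

lemma NatExt_zero [simp]: "NatExt a (0, y) = (0, 0)"
  by (simp add: NatExt_def)

lemma NatExt_nonzero:
  "x \<noteq> 0 \<Longrightarrow> NatExt a (x, y) = (1 / x - digit a x, 1 / (y + digit a x))"
  by (simp add: NatExt_def Tmap_def digit_def)

lemma NatExt_eqI:
  assumes "x \<noteq> 0" "of_int e \<le> 1 / x + 1 - a" "1 / x + 1 - a < of_int e + 1"
  shows "NatExt a (x, y) = (1 / x - e, 1 / (y + e))"
  using NatExt_nonzero[OF assms(1)] digit_eqI[OF assms(2,3)] by simp

lemma fst_NatExt_bounds:
  assumes "0 < a" "a \<le> 1"
  shows "a - 1 \<le> fst (NatExt a p) \<and> fst (NatExt a p) < a"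
proof (cases p)
  case (Pair x y)
  then show ?thesis
    using assms digit_bounds[where a=a and x=x] by (cases "x = 0") (auto simp: NatExt_nonzero)
qed

lemma NatExt_shift:
  assumes "w \<noteq> 0" "v \<noteq> 0" "1 / w = 1 / v + 1"
  shows "NatExt b (w, z) = NatExt b (v, z + 1)"
proof -
  have "digit b w = digit b v + 1"
    using assms(3) digit_bounds[where a=b and x=v] by (intro digit_eqI) simp_all
  then show ?thesis
    using assms by (simp add: NatExt_nonzero algebra_simps)
qed

lemma NatExt_reflect:
  fixes x y :: real
  assumes "0 < x" "x < 1" "y + 1 \<noteq> 0"
  shows "NatExt b (1 - x, -y / (y + 1)) = NatExt b (1 / x - 1, 1 / (y + 1))"
proof -
  have "NatExt b (1 - x, -y / (y + 1)) = NatExt b (1 / x - 1, -y / (y + 1) + 1)"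
    using assms by (intro NatExt_shift) (auto simp: field_simps)
  also have "-y / (y + 1) + 1 = 1 / (y + 1)"
    using assms(3) by (simp add: field_simps)
  finally show ?thesis .
qed

lemma Sset_eq: "Sset (x, y) = {(x, y), (-x, -y), (x + 1, y / (1 - y)), (1 - x, - y / (y + 1))}"
  by (simp add: Sset_def)

lemma sqrt2_facts: "sqrt 2 * sqrt 2 = 2" "141/100 < sqrt 2" "sqrt 2 < 142/100"
proof -
  show "sqrt 2 * sqrt 2 = 2" by simp
  show "141/100 < sqrt 2" by (rule real_less_rsqrt) (simp add: power2_eq_square)
  show "sqrt 2 < 142/100" by (rule real_less_lsqrt) (simp_all add: power2_eq_square)
qed

lemma sqrt2_reciprocals:
  "1 / sqrt 2 = sqrt 2 / 2" "1 - sqrt 2 = -1 / (1 + sqrt 2)" "1 / sqrt 2 - 1 = -1 / (2 + sqrt 2)"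
  "2 - sqrt 2 = 1 / (1 + 1 / sqrt 2)" "1 - 1 / sqrt 2 = 1 / (2 + sqrt 2)"
  "1 / (1 + sqrt 2) = sqrt 2 - 1"
  using sqrt2_facts by (simp_all add: field_simps)

lemma golden_le_bounds:
  assumes "(sqrt 5 - 1) / 2 \<le> a"
  shows "3/5 < a" "1 \<le> a + a * a"
proof -
  let ?g = "(sqrt 5 - 1) / 2"
  have "11/5 < sqrt 5" by (rule real_less_rsqrt) (simp add: power2_eq_square)
  then have "3/5 < ?g" by simp
  then show "3/5 < a" using assms by linarith
  have "?g + ?g * ?g = 1" by (simp add: field_simps)
  moreover have "?g * ?g \<le> a * a" using assms \<open>11/5 < sqrt 5\<close> by (intro mult_mono) auto
  ultimately show "1 \<le> a + a * a" using assms by linarith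
qed

definition trapping_region :: "real \<Rightarrow> (real \<times> real) set" where
  "trapping_region a = {(x, y). a - 1 \<le> x \<and> x \<le> a \<and> 1 - sqrt 2 \<le> y \<and> y \<le> sqrt 2
     \<and> (0 \<le> x \<or> y \<le> 2 - sqrt 2) \<and> (x \<le> 1/2 \<or> 1 / sqrt 2 - 1 \<le> y)}"

lemma closed_trapping_region: "closed (trapping_region a)"
proof -
  have "trapping_region a = {p. a - 1 \<le> fst p \<and> fst p \<le> a \<and> 1 - sqrt 2 \<le> snd p \<and> snd p \<le> sqrt 2
     \<and> (0 \<le> fst p \<or> snd p \<le> 2 - sqrt 2) \<and> (fst p \<le> 1/2 \<or> 1 / sqrt 2 - 1 \<le> snd p)}"
    by (auto simp: trapping_region_def)
  also have "closed \<dots>"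
    by (intro closed_Collect_conj closed_Collect_disj closed_Collect_le continuous_intros)
  finally show ?thesis .
qed

lemma digit_le_neg3:
  assumes "3/5 < a" "a < 1" "a - 1 \<le> x" "x < 0"
  shows "digit a x \<le> -3" "1 / x < -5/2"
proof -
  have "1 / x \<le> 1 / (a - 1)" using assms by (simp add: field_simps)
  also have "\<dots> < -5/2" using assms by (simp add: field_simps)
  finally show "1 / x < -5/2" .
  then show "digit a x \<le> -3" using digit_bounds[where a=a and x=x] assms by linarith
qed

lemma digit_ge1:
  assumes "a < 1" "0 < x" "x \<le> a"
  shows "1 \<le> digit a x" "1 < 1 / x"
proof -
  show "1 < 1 / x" using assms by (simp add: field_simps)
  then show "1 \<le> digit a x" using digit_bounds[where a=a and x=x] assms by linarith
qed

lemma NatExt_trapping_region_neg: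
  assumes "3/5 < a" "a < 1" "(x, y) \<in> trapping_region a" "x < 0"
  shows "NatExt a (x, y) \<in> trapping_region a"
proof -
  define d where "d = digit a x"
  have x: "a - 1 \<le> x" and y: "1 - sqrt 2 \<le> y" "y \<le> 2 - sqrt 2"
    using assms by (auto simp: trapping_region_def)
  have d: "d \<le> -3" "1 / x < -5/2" "d \<le> 1 / x + 1 - a" "1 / x + 1 - a < d + 1"
    using digit_le_neg3[OF assms(1,2) x assms(4)] digit_bounds[where a=a and x=x]
    by (auto simp: d_def)
  have "-1 / (1 + sqrt 2) \<le> 1 / (y + d)"
    using d y sqrt2_facts by (simp add: field_simps)
  then have Y_ge: "1 - sqrt 2 \<le> 1 / (y + d)" by (simp add: sqrt2_reciprocals(2))
  have Y_neg: "1 / (y + d) < 0" using d y sqrt2_facts by (simp add: divide_less_0_iff)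
  have Y_ge': "1 / x - d \<le> 1/2 \<or> 1 / sqrt 2 - 1 \<le> 1 / (y + d)"
  proof (cases "1 / x - d \<le> 1/2")
    case False
    then have "d \<le> -4" using d by linarith
    then have "-1 / (2 + sqrt 2) \<le> 1 / (y + d)"
      using y sqrt2_facts by (simp add: field_simps)
    then show ?thesis by (simp add: sqrt2_reciprocals(3))
  qed simp
  have "a - 1 \<le> 1 / x - d" "1 / x - d < a" using d by linarith+
  moreover have NE: "NatExt a (x, y) = (1 / x - d, 1 / (y + d))"
    using assms(4) by (simp add: NatExt_nonzero d_def)
  ultimately show ?thesis
    using Y_ge Y_neg Y_ge' sqrt2_facts
    by (simp only: NE trapping_region_def mem_Collect_eq case_prod_conv)
      (intro conjI TrueI; (blast | linarith | (rule disjI2, linarith)))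
qed

lemma NatExt_trapping_region_pos:
  assumes "a < 1" "(x, y) \<in> trapping_region a" "0 < x"
  shows "NatExt a (x, y) \<in> trapping_region a"
proof -
  define d where "d = digit a x"
  have x: "x \<le> a" "1/2 < x \<Longrightarrow> 1 / sqrt 2 - 1 \<le> y" and y: "1 - sqrt 2 \<le> y"
    using assms by (auto simp: trapping_region_def)
  have d: "1 \<le> d" "1 < 1 / x" "d \<le> 1 / x + 1 - a" "1 / x + 1 - a < d + 1"
    using digit_ge1[OF assms(1,3) x(1)] digit_bounds[where a=a and x=x] by (auto simp: d_def)
  have y_large: "1 / sqrt 2 - 1 \<le> y" if "1 / x < 2"
    using that assms(3) x(2) by (simp add: field_simps)
  have "1 / sqrt 2 \<le> y + d"
  proof (cases "d = 1")
    case True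
    then show ?thesis using y_large d assms(1) by simp
  next
    case False
    then have "2 \<le> d" using d(1) by linarith
    then show ?thesis using y sqrt2_facts sqrt2_reciprocals(1) by linarith
  qed
  then have "1 / (y + d) \<le> 1 / (1 / sqrt 2)" by (intro frac_le) auto
  then have Y_le: "1 / (y + d) \<le> sqrt 2" by simp
  have y_sum: "1 + 1 / sqrt 2 \<le> y + d" if X_neg: "1 / x - d < 0"
  proof (cases "d = 2")
    case True
    then show ?thesis using y_large X_neg by simp
  next
    case False
    have "3 \<le> d" using False X_neg d by linarith
    then show ?thesis using y sqrt2_facts sqrt2_reciprocals(1) by linarith
  qed
  have Y_le': "0 \<le> 1 / x - d \<or> 1 / (y + d) \<le> 2 - sqrt 2"
  proof (cases "0 \<le> 1 / x - d")
    case False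
    then have "1 / (y + d) \<le> 1 / (1 + 1 / sqrt 2)"
      using y_sum by (intro frac_le) (simp_all add: add_pos_pos)
    then show ?thesis by (simp add: sqrt2_reciprocals(4))
  qed simp
  have "0 < 1 / (y + d)" using y d sqrt2_facts by simp
  moreover have "a - 1 \<le> 1 / x - d" "1 / x - d < a" using d by linarith+
  moreover have NE: "NatExt a (x, y) = (1 / x - d, 1 / (y + d))"
    using assms(3) by (simp add: NatExt_nonzero d_def)
  moreover have "1 / sqrt 2 < 1" by simp
  ultimately show ?thesis
    using Y_le Y_le' sqrt2_facts
    by (simp only: NE trapping_region_def mem_Collect_eq case_prod_conv)
      (intro conjI TrueI; (blast | linarith | (rule disjI2, linarith)))
qed

lemma NatExt_trapping_region:
  assumes "(sqrt 5 - 1) / 2 \<le> a" "a < 1" "p \<in> trapping_region a"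
  shows "NatExt a p \<in> trapping_region a"
proof (cases p)
  case (Pair x y)
  consider "x < 0" | "x = 0" | "0 < x" by linarith
  then show ?thesis
    using assms golden_le_bounds(1)[OF assms(1)] sqrt2_facts
      NatExt_trapping_region_neg NatExt_trapping_region_pos
    by cases (auto simp: Pair trapping_region_def)
qed

lemma Omega_subset_trapping_region:
  assumes "(sqrt 5 - 1) / 2 \<le> a" "a < 1"
  shows "Omega a \<subseteq> trapping_region a"
proof -
  have "(NatExt a ^^ n) ` ({a - 1..<a} \<times> {0}) \<subseteq> trapping_region a" for n
  proof (induction n)
    case 0
    then show ?case
      using golden_le_bounds(1)[OF assms(1)] sqrt2_facts by (auto simp: trapping_region_def)
  next
    case (Suc n)
    then show ?case
      by (auto simp: image_subset_iff intro!: NatExt_trapping_region[OF assms])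
  qed
  then show ?thesis
    unfolding Omega_def by (intro UN_least closure_minimal closed_trapping_region)
qed

definition reaches_Sset :: "real \<Rightarrow> real \<times> real \<Rightarrow> real \<times> real \<Rightarrow> bool" where
  "reaches_Sset b s p \<longleftrightarrow> (\<exists>k\<ge>1. (NatExt b ^^ k) s \<in> Sset p)"

lemma reaches_SsetI: "1 \<le> k \<Longrightarrow> (NatExt b ^^ k) s \<in> Sset p \<Longrightarrow> reaches_Sset b s p"
  unfolding reaches_Sset_def by blast

lemma reaches_Sset_funpow:
  assumes "1 \<le> k" "reaches_Sset b ((NatExt b ^^ k) s) p"
  shows "reaches_Sset b s p"
proof -
  obtain j where "1 \<le> j" "(NatExt b ^^ j) ((NatExt b ^^ k) s) \<in> Sset p"
    using assms(2) unfolding reaches_Sset_def by blast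
  then show ?thesis
    by (intro reaches_SsetI[of "j + k"]) (simp_all add: funpow_add)
qed

locale ordered_parameters =
  fixes a b :: real
  assumes golden_le: "(sqrt 5 - 1) / 2 \<le> a" and less: "a < b" and le_one: "b \<le> 1"
begin

lemma parameter_bounds:
  "3/5 < a" "a < 1" "1 < a + b" "b \<le> a + 1" "1 / a \<le> 1 + a" "1 / (1 + a) \<le> a"
proof -
  show "3/5 < a" "a < 1" "1 < a + b" "b \<le> a + 1"
    using golden_le_bounds(1)[OF golden_le] less le_one by linarith+
  show "1 / a \<le> 1 + a" "1 / (1 + a) \<le> a"
    using golden_le_bounds[OF golden_le] by (simp_all add: field_simps)
qed

lemma digit_nonzero:
  fixes x y :: real
  assumes "(x, y) \<in> trapping_region a" "x \<noteq> 0"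
  shows "y + of_int (digit a x) \<noteq> 0"
proof (cases "x < 0")
  case True
  then have "digit a x \<le> -3" "y \<le> 2 - sqrt 2"
    using assms parameter_bounds digit_le_neg3 by (auto simp: trapping_region_def)
  then show ?thesis using sqrt2_facts by linarith
next
  case False
  then have "1 \<le> digit a x" "1 - sqrt 2 \<le> y"
    using assms parameter_bounds digit_ge1 by (auto simp: trapping_region_def)
  then show ?thesis using sqrt2_facts by linarith
qed

text \<open>Since \<open>a < b \<le> a + 1\<close>, the \<open>b\<close>-digit of a point is its \<open>a\<close>-digit or one less;
  the two alternatives land on different elements of \<open>Sset\<close>.\<close>

lemma NatExt_in_Sset_NatExt:
  fixes x y :: real
  assumes "x \<noteq> 0" "y + of_int (digit a x) \<noteq> 0"
  shows "NatExt b (x, y) \<in> Sset (NatExt a (x, y))"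
proof -
  define d where "d = digit a x"
  have d: "d \<le> 1 / x + 1 - a" "1 / x + 1 - a < d + 1" "y + d \<noteq> 0"
    using digit_bounds[where a=a and x=x] assms(2) by (auto simp: d_def)
  have NA: "NatExt a (x, y) = (1 / x - d, 1 / (y + d))"
    using assms(1) by (simp add: NatExt_nonzero d_def)
  show ?thesis
  proof (cases "b - 1 \<le> 1 / x - d")
    case True
    then have "NatExt b (x, y) = NatExt a (x, y)"
      unfolding NA using assms(1) d parameter_bounds less by (intro NatExt_eqI) auto
    then show ?thesis by (simp add: Sset_def Let_def)
  next
    case False
    then have "NatExt b (x, y) = (1 / x - of_int (d - 1), 1 / (y + of_int (d - 1)))"
      using assms(1) d parameter_bounds less by (intro NatExt_eqI) auto
    also have "\<dots> = (1 / x - d + 1, (1 / (y + d)) / (1 - 1 / (y + d)))"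
      using d(3) by (cases "y + d = 1") (simp_all add: field_simps)
    finally show ?thesis unfolding NA Sset_eq by simp
  qed
qed

lemma NatExt_neg_in_Sset_NatExt:
  fixes x y :: real
  assumes "x \<noteq> 0" "y + of_int (digit a x) \<noteq> 0"
  shows "NatExt b (-x, -y) \<in> Sset (NatExt a (x, y))"
proof -
  define d where "d = digit a x"
  have d: "d \<le> 1 / x + 1 - a" "1 / x + 1 - a < d + 1" "y + d \<noteq> 0"
    using digit_bounds[where a=a and x=x] assms(2) by (auto simp: d_def)
  have NA: "NatExt a (x, y) = (1 / x - d, 1 / (y + d))"
    using assms(1) by (simp add: NatExt_nonzero d_def)
  show ?thesis
  proof (cases "1 / x - d \<le> 1 - b")
    case True
    then have "NatExt b (-x, -y) = (1 / (-x) - of_int (-d), 1 / (-y + of_int (-d)))"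
      using assms(1) d parameter_bounds le_one by (intro NatExt_eqI) auto
    also have "\<dots> = (-(1 / x - d), -(1 / (y + d)))"
      using d(3) by (simp add: field_simps)
    finally show ?thesis unfolding NA Sset_eq by simp
  next
    case False
    then have "NatExt b (-x, -y) = (1 / (-x) - of_int (-d - 1), 1 / (-y + of_int (-d - 1)))"
      using assms(1) d parameter_bounds le_one by (intro NatExt_eqI) auto
    also have "\<dots> = (1 - (1 / x - d), - (1 / (y + d)) / (1 / (y + d) + 1))"
      using d(3) by (cases "y + d = -1") (simp_all add: field_simps)
    finally show ?thesis unfolding NA Sset_eq by simp
  qed
qed

lemma NatExt_flip_in_Sset_NatExt:
  fixes x y :: real
  assumes "a - 1 \<le> x" "x \<noteq> 0 \<Longrightarrow> y + of_int (digit a x) \<noteq> 0"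
  shows "NatExt b (-x / (1 + x), 1 - y) \<in> Sset (NatExt a (x, y))"
proof (cases "x = 0")
  case True
  then show ?thesis by (simp add: Sset_eq)
next
  case False
  define d where "d = digit a x"
  have d: "d \<le> 1 / x + 1 - a" "1 / x + 1 - a < d + 1" "y + d \<noteq> 0"
    using digit_bounds[where a=a and x=x] assms(2) False by (auto simp: d_def)
  have NA: "NatExt a (x, y) = (1 / x - d, 1 / (y + d))"
    using False by (simp add: NatExt_nonzero d_def)
  have "0 < 1 + x" using assms(1) parameter_bounds by linarith
  then have w: "-x / (1 + x) \<noteq> 0" "1 / (-x / (1 + x)) = - (1 / x) - 1"
    using False by (simp_all add: field_simps)
  show ?thesis
  proof (cases "1 / x - d \<le> 1 - b")
    case True
    then have "NatExt b (-x / (1 + x), 1 - y)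
        = (1 / (-x / (1 + x)) - of_int (-d - 1), 1 / (1 - y + of_int (-d - 1)))"
      using w d parameter_bounds by (intro NatExt_eqI) auto
    also have "\<dots> = (-(1 / x - d), -(1 / (y + d)))"
      unfolding w(2) using d(3) by (simp add: field_simps)
    finally show ?thesis unfolding NA Sset_eq by simp
  next
    case False
    then have "NatExt b (-x / (1 + x), 1 - y)
        = (1 / (-x / (1 + x)) - of_int (-d - 2), 1 / (1 - y + of_int (-d - 2)))"
      using w d parameter_bounds le_one by (intro NatExt_eqI) auto
    also have "\<dots> = (1 - (1 / x - d), - (1 / (y + d)) / (1 / (y + d) + 1))"
      unfolding w(2) using d(3) by (cases "y + d = -1") (simp_all add: field_simps)
    finally show ?thesis unfolding NA Sset_eq by simp
  qed
qed

lemma NatExt_translate: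
  fixes x y :: real
  assumes "a - 1 \<le> x" "x < 0" "y \<noteq> 1"
  shows "NatExt b (x + 1, y / (1 - y)) = (-x / (1 + x), 1 - y)"
proof -
  have x: "0 < x + 1" "1 < 1 / (x + 1)" using assms parameter_bounds by (simp_all add: field_simps)
  have "1 / (x + 1) \<le> 1 / a"
    using assms(1) parameter_bounds by (intro frac_le) simp_all
  have "NatExt b (x + 1, y / (1 - y)) = (1 / (x + 1) - of_int 1, 1 / (y / (1 - y) + of_int 1))"
    by (rule NatExt_eqI)
      (use x \<open>1 / (x + 1) \<le> 1 / a\<close> parameter_bounds less le_one in \<open>simp only: of_int_1; linarith\<close>)+
  also have "\<dots> = (-x / (1 + x), 1 - y)"
    using x assms(3) by (simp add: field_simps)
  finally show ?thesis .
qed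

lemma reaches_Sset_translate:
  assumes "(x, y) \<in> trapping_region a" "x < 0"
  shows "reaches_Sset b (x + 1, y / (1 - y)) (NatExt a (x, y))"
proof (rule reaches_SsetI[of 2])
  have x: "a - 1 \<le> x" and y: "y \<noteq> 1"
    using assms sqrt2_facts by (auto simp: trapping_region_def)
  show "(NatExt b ^^ 2) (x + 1, y / (1 - y)) \<in> Sset (NatExt a (x, y))"
    using NatExt_translate[OF x assms(2) y] NatExt_flip_in_Sset_NatExt[OF x] digit_nonzero[OF assms(1)]
    by (simp add: numeral_2_eq_2)
qed simp

lemma reaches_Sset_reflect_digit1:
  assumes "(x, y) \<in> trapping_region a" "0 < x" "digit a x = 1"
  shows "1 - 1 / sqrt 2 \<le> snd (NatExt a (x, y))
    \<and> reaches_Sset b (1 - x, -y / (y + 1)) (NatExt a (NatExt a (x, y)))"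
proof
  have x: "x < 1" and y: "0 < y + 1" "y + 1 \<le> 1 + sqrt 2"
    using assms parameter_bounds sqrt2_facts by (auto simp: trapping_region_def)
  have NA: "NatExt a (x, y) = (1 / x - 1, 1 / (y + 1))"
    using assms by (simp add: NatExt_nonzero)
  have "1 / (1 + sqrt 2) \<le> 1 / (y + 1)"
    using y by (intro frac_le) simp_all
  then show "1 - 1 / sqrt 2 \<le> snd (NatExt a (x, y))"
    unfolding NA using sqrt2_facts sqrt2_reciprocals(1,6) by simp
  have "NatExt a (x, y) \<in> trapping_region a"
    using NatExt_trapping_region[OF golden_le parameter_bounds(2) assms(1)] .
  moreover have "1 / x - 1 \<noteq> 0" using assms(2) x by (simp add: field_simps)
  ultimately have "NatExt b (NatExt a (x, y)) \<in> Sset (NatExt a (NatExt a (x, y)))"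
    unfolding NA by (intro NatExt_in_Sset_NatExt digit_nonzero)
  then show "reaches_Sset b (1 - x, -y / (y + 1)) (NatExt a (NatExt a (x, y)))"
    using NatExt_reflect[OF assms(2) x] y unfolding NA by (intro reaches_SsetI[of 1]) simp_all
qed

lemma reaches_Sset_reflect_digit_ge2:
  assumes "(x, y) \<in> trapping_region a" "0 < x" "2 \<le> digit a x" "1 / (1 / x - 1) < b"
  shows "reaches_Sset b (1 - x, -y / (y + 1)) (NatExt a (x, y))"
proof (rule reaches_SsetI[of 2])
  define d where "d = digit a x"
  define v where "v = 1 / x - 1"
  have x: "x < 1" and y: "0 < y + 1"
    using assms parameter_bounds sqrt2_facts by (auto simp: trapping_region_def)
  have d: "d \<le> 1 / x + 1 - a" "1 / x + 1 - a < d + 1" "y + d \<noteq> 0"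
    using digit_bounds[where a=a and x=x] digit_nonzero[OF assms(1)] assms(2) by (auto simp: d_def)
  have "a \<le> v" using assms(3) d unfolding v_def d_def by linarith
  then have v: "0 < v" "1 / (1 / v) = 1 / x - 1" using parameter_bounds by (simp_all add: v_def)
  have "0 < 1 / v" "1 / v < b" using v(1) assms(4) by (simp_all add: v_def)
  then have "NatExt b (v, 1 / (y + 1)) = (1 / v - of_int 0, 1 / (1 / (y + 1) + of_int 0))"
    by (intro NatExt_eqI) (use v(1) le_one in \<open>simp only: of_int_0; linarith\<close>)+
  then have step1: "NatExt b (1 - x, -y / (y + 1)) = (1 / v, y + 1)"
    using NatExt_reflect[OF assms(2) x] y by (simp add: v_def)
  have "digit a (1 / v) = d - 1"
    using d v by (intro digit_eqI) simp_all
  then have "NatExt a (1 / v, y + 1) = NatExt a (x, y)"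
    using v assms(2) by (simp add: NatExt_nonzero d_def algebra_simps)
  moreover have "NatExt b (1 / v, y + 1) \<in> Sset (NatExt a (1 / v, y + 1))"
    using v d \<open>digit a (1 / v) = d - 1\<close> by (intro NatExt_in_Sset_NatExt) (simp_all add: algebra_simps)
  ultimately show "(NatExt b ^^ 2) (1 - x, -y / (y + 1)) \<in> Sset (NatExt a (x, y))"
    using step1 by (simp add: numeral_2_eq_2)
qed simp

lemma reaches_Sset_reflect_digit2:
  assumes "(x, y) \<in> trapping_region a" "0 < x" "digit a x = 2" "b \<le> 1 / (1 / x - 1)"
  shows "1 - 1 / sqrt 2 \<le> snd (NatExt a (x, y))
    \<and> reaches_Sset b (1 - x, -y / (y + 1)) (NatExt a (NatExt a (x, y)))"
proof
  define v where "v = 1 / x - 1"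
  have x: "x < 1" and y: "0 < y + 1" "y + 2 \<le> 2 + sqrt 2"
    using assms parameter_bounds sqrt2_facts by (auto simp: trapping_region_def)
  have NA: "NatExt a (x, y) = (v - 1, 1 / (y + 2))"
    using assms(2,3) by (simp add: NatExt_nonzero v_def)
  have "1 / (2 + sqrt 2) \<le> 1 / (y + 2)"
    using y by (intro frac_le) simp_all
  then show "1 - 1 / sqrt 2 \<le> snd (NatExt a (x, y))"
    unfolding NA by (simp add: sqrt2_reciprocals(5))
  have "a \<le> v"
    using assms(3) digit_bounds[where a=a and x=x] unfolding v_def by simp
  then have v: "0 < v" "1 / v \<le> 1 / a" "b \<le> 1 / v"
    using parameter_bounds assms(4) by (simp_all add: frac_le v_def)
  then have "NatExt b (v, 1 / (y + 1)) = (1 / v - of_int 1, 1 / (1 / (y + 1) + of_int 1))"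
    by (intro NatExt_eqI) (use parameter_bounds less in \<open>simp only: of_int_1; linarith\<close>)+
  also have "\<dots> = (- (v - 1) / (1 + (v - 1)), 1 - 1 / (y + 2))"
    using v(1) y(1) by (simp add: field_simps)
  finally have step1: "NatExt b (1 - x, -y / (y + 1)) = (- (v - 1) / (1 + (v - 1)), 1 - 1 / (y + 2))"
    using NatExt_reflect[OF assms(2) x] y by (simp add: v_def)
  have region: "NatExt a (x, y) \<in> trapping_region a"
    using NatExt_trapping_region[OF golden_le parameter_bounds(2) assms(1)] .
  then have "a - 1 \<le> v - 1" unfolding NA by (simp add: trapping_region_def)
  then have "NatExt b (- (v - 1) / (1 + (v - 1)), 1 - 1 / (y + 2)) \<in> Sset (NatExt a (NatExt a (x, y)))"
    unfolding NA using digit_nonzero region[unfolded NA] by (intro NatExt_flip_in_Sset_NatExt)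
  then show "reaches_Sset b (1 - x, -y / (y + 1)) (NatExt a (NatExt a (x, y)))"
    using step1 by (intro reaches_SsetI[of 2]) (simp_all add: numeral_2_eq_2)
qed

lemma reaches_Sset_reflect:
  assumes "(x, y) \<in> trapping_region a" "0 < x"
  shows "reaches_Sset b (1 - x, -y / (y + 1)) (NatExt a (x, y))
    \<or> 1 - 1 / sqrt 2 \<le> snd (NatExt a (x, y))
      \<and> reaches_Sset b (1 - x, -y / (y + 1)) (NatExt a (NatExt a (x, y)))"
proof -
  have "x \<le> a" using assms(1) by (simp add: trapping_region_def)
  then have "1 \<le> digit a x" using digit_ge1 assms(2) parameter_bounds(2) by blast
  moreover have "1 / (1 / x - 1) < b" if "3 \<le> digit a x"
  proof -
    have "1 + a \<le> 1 / x - 1"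
      using that digit_bounds[where a=a and x=x] by linarith
    then have "1 / (1 / x - 1) \<le> 1 / (1 + a)"
      using parameter_bounds by (intro frac_le) simp_all
    then show ?thesis using parameter_bounds less by linarith
  qed
  ultimately consider "digit a x = 1" | "2 \<le> digit a x" "1 / (1 / x - 1) < b"
    | "digit a x = 2" "b \<le> 1 / (1 / x - 1)"
    by fastforce
  then show ?thesis
    using reaches_Sset_reflect_digit1 reaches_Sset_reflect_digit_ge2 reaches_Sset_reflect_digit2 assms
    by cases blast+
qed

lemma reaches_Sset_step:
  assumes "p \<in> trapping_region a" "s \<in> Sset p" "b - 1 \<le> fst s" "fst s < b"
  shows "reaches_Sset b s (NatExt a p)
    \<or> 1 - 1 / sqrt 2 \<le> snd (NatExt a p) \<and> reaches_Sset b s (NatExt a (NatExt a p))"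
proof -
  obtain x y where p: "p = (x, y)" by fastforce
  have s: "s = (x, y) \<or> s = (-x, -y) \<or> s = (x + 1, y / (1 - y)) \<or> s = (1 - x, -y / (y + 1))"
    using assms(2) by (simp add: p Sset_eq)
  show ?thesis
  proof (cases "x = 0")
    case True
    then have "NatExt b s \<in> Sset (NatExt a p)"
      using s assms(4) le_one by (auto simp: p Sset_eq)
    then show ?thesis by (auto intro: reaches_SsetI[of 1])
  next
    case False
    then have "y + of_int (digit a x) \<noteq> 0" using assms(1) digit_nonzero p by blast
    then have "s = (x, y) \<or> s = (-x, -y) \<Longrightarrow> NatExt b s \<in> Sset (NatExt a p)"
      using False NatExt_in_Sset_NatExt NatExt_neg_in_Sset_NatExt p by blast
    moreover have "x < 0" if "s = (x + 1, y / (1 - y))"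
      using that assms(4) le_one by simp
    moreover have "0 < x" if "s = (1 - x, -y / (y + 1))"
      using that assms(4) le_one by simp
    ultimately show ?thesis
      using s reaches_Sset_translate reaches_Sset_reflect assms(1)
      by (auto simp: p intro: reaches_SsetI[of 1])
  qed
qed

lemma reaches_Sset_advance:
  assumes "q \<in> trapping_region a" "reaches_Sset b s q"
  shows "reaches_Sset b s (NatExt a q)
    \<or> 1 - 1 / sqrt 2 \<le> snd (NatExt a q) \<and> reaches_Sset b s (NatExt a (NatExt a q))"
proof -
  obtain k where k: "1 \<le> k" "(NatExt b ^^ k) s \<in> Sset q"
    using assms(2) unfolding reaches_Sset_def by blast
  then obtain j where "k = Suc j" by (cases k) auto
  then have "b - 1 \<le> fst ((NatExt b ^^ k) s) \<and> fst ((NatExt b ^^ k) s) < b"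
    using fst_NatExt_bounds parameter_bounds less le_one by simp
  then show ?thesis
    using reaches_Sset_step[OF assms(1) k(2)] reaches_Sset_funpow[OF k(1)] by blast
qed

lemma funpow_NatExt_trapping_region:
  "p \<in> trapping_region a \<Longrightarrow> (NatExt a ^^ m) p \<in> trapping_region a"
  by (induction m) (simp_all add: NatExt_trapping_region[OF golden_le parameter_bounds(2)])

lemma reaches_Sset_iterate:
  assumes "p \<in> trapping_region a" "s \<in> Sset p" "b - 1 \<le> fst s" "fst s < b" "1 \<le> m"
  shows "reaches_Sset b s ((NatExt a ^^ m) p)
    \<or> 1 - 1 / sqrt 2 \<le> snd ((NatExt a ^^ m) p) \<and> reaches_Sset b s ((NatExt a ^^ Suc m) p)"
  using assms(5)
proof (induction m rule: nat_induct_at_least)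
  case base
  then show ?case using reaches_Sset_step[OF assms(1-4)] by simp
next
  case (Suc m)
  from Suc.IH show ?case
  proof
    assume "reaches_Sset b s ((NatExt a ^^ m) p)"
    then show ?case
      using reaches_Sset_advance[OF funpow_NatExt_trapping_region[OF assms(1)]] by simp
  qed simp
qed

end

theorem lemma4p4:
  fixes a b x y xt yt :: real and n :: nat
  assumes "(sqrt 5 - 1) / 2 \<le> a" and "a < b" and "b \<le> 1"
    and "(x, y) \<in> Omega a"
    and "(xt, yt) \<in> Sset (x, y)"
    and "n \<ge> 1"
    and "b - 1 \<le> xt" and "xt < b"
    and "snd ((NatExt a ^^ n) (x, y)) < 1 - 1 / sqrt 2"
  shows "\<exists>k\<ge>1. (NatExt b ^^ k) (xt, yt) \<in> Sset ((NatExt a ^^ n) (x, y))"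
proof -
  interpret ordered_parameters a b
    using assms(1-3) by unfold_locales
  have "(x, y) \<in> trapping_region a"
    using Omega_subset_trapping_region[OF assms(1) parameter_bounds(2)] assms(4) by blast
  from reaches_Sset_iterate[OF this assms(5) _ _ assms(6)] assms(7-9)
  show ?thesis unfolding reaches_Sset_def by force
qed

end
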